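(* Let $N\ge1$, $w\ge1$, fix a round $t$, and let $\rho>1$. For each client $n\in\{1,\dots,N\}$ let $\Delta\theta_n^t$ be a random vector in $\mathbb{R}^w$ (its randomness coming from the local dataset) with $\mathbb{E}\|\Delta\theta_n^t\|^\rho<\infty$, let $q_n^t\in(0,1]$ and $c_n^t>0$ be deterministic, and set $q^t=\frac1N\sum_{n=1}^N q_n^t$. Let $b_n^t\sim\mathrm{Bernoulli}(q_n^t)$ and let $z_n^t,\tilde z_n^t$ be zero-mean Gaussian vectors in $\mathbb{R}^w$, all independent of the $\Delta\theta_n^t$. Define $\mathrm{clip}(x,c)=x\min(1,c/\|x\|)$, the aggregate update $\Delta\theta^t=\frac1N\sum_{n=1}^N\Delta\theta_n^t$, the perturbed aggregate $$\tilde\Delta\theta^t=\frac1N\sum_{n=1}^N\frac{1}{q^t}\Big(b_n^t\big(\mathrm{clip}(\Delta\theta_n^t,c_n^t)+z_n^t\big)+(1-b_n^t)\tilde z_n^t\Big),$$ and $\mathrm{Error}_t=\Delta\theta^t-\tilde\Delta\theta^t$. Then, with expectation taken over the local-data randomness, the client sampling and the Gaussian noise, $$\big\|\mathbb{E}[\mathrm{Error}_t]\big\|\le\frac1N\Big\|\sum_{n=1}^N\Big(1-\frac{q_n^t}{q^t}\Big)\mathbb{E}[\Delta\theta_n^t]\Big\|+\frac1N\sum_{n=1}^N\frac{q_n^t}{q^t}\,\frac{\mathbb{E}\|\Delta\theta_n^t\|^\rho}{(c_n^t)^{\rho-1}}.$$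
   Context: Setting: one round of differentially private federated averaging in which client $n$ participates (is sampled) with probability $q_n^t$, clips its local model update to norm $c_n^t$, and adds Gaussian noise; non-sampled clients contribute pure noise; $q^t$ is the average sampling rate. $\|\cdot\|$ is the Euclidean norm. *)

theory Defs
  imports "HOL-Probability.Probability"
begin

text \<open>Clipping: clip(x,c) = x * min(1, c/norm x). (At x = 0 this yields 0.)\<close>
definition clip :: "'v::real_normed_vector \<Rightarrow> real \<Rightarrow> 'v" where
  "clip x c = min 1 (c / norm x) *\<^sub>R x"

definition zero_mean_gaussian :: "'a measure \<Rightarrow> ('a \<Rightarrow> 'v::euclidean_space) \<Rightarrow> bool" where
  "zero_mean_gaussian M X \<longleftrightarrow> X \<in> borel_measurable M \<and>
     (\<forall>u. (AE x in M. u \<bullet> X x = 0) \<or>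
          (\<exists>\<sigma>>0. distributed M lborel (\<lambda>x. u \<bullet> X x) (\<lambda>y. ennreal (normal_density 0 \<sigma> y))))"

text \<open>Index type for the independent family: the (joint) local-data randomness,
  the sampling indicators b_n, the noises z_n and the noises z~_n.\<close>
datatype ridx = DataIdx | SampIdx nat | NoiseIdx nat | AltNoiseIdx nat

definition fl_events ::
  "'a measure \<Rightarrow> nat \<Rightarrow> (nat \<Rightarrow> 'a \<Rightarrow> 'v::euclidean_space) \<Rightarrow> (nat \<Rightarrow> 'a \<Rightarrow> bool)
     \<Rightarrow> (nat \<Rightarrow> 'a \<Rightarrow> 'v) \<Rightarrow> (nat \<Rightarrow> 'a \<Rightarrow> 'v) \<Rightarrow> ridx \<Rightarrow> 'a set set" where
  "fl_events M N D b z zt i = (case i of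
      DataIdx \<Rightarrow> sigma_sets (space M)
                   (\<Union>n\<in>{1..N}. {D n -` A \<inter> space M | A. A \<in> sets (borel :: 'v measure)})
    | SampIdx n \<Rightarrow> {b n -` A \<inter> space M | A. A \<in> sets (count_space (UNIV :: bool set))}
    | NoiseIdx n \<Rightarrow> {z n -` A \<inter> space M | A. A \<in> sets (borel :: 'v measure)}
    | AltNoiseIdx n \<Rightarrow> {zt n -` A \<inter> space M | A. A \<in> sets (borel :: 'v measure)})"

definition fl_index :: "nat \<Rightarrow> ridx set" where
  "fl_index N = {DataIdx} \<union> SampIdx ` {1..N} \<union> NoiseIdx ` {1..N} \<union> AltNoiseIdx ` {1..N}"

end

(* Since b_n is independent of the local update and of
   the noises, and the noises are centred, client n contributes (q_n / q) E clip(D_n, c_n) to the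
   expected perturbed aggregate. Hence
     E Error = 1/N sum_n (1 - q_n / q) E D_n + 1/N sum_n (q_n / q) (E D_n - E clip(D_n, c_n)),
   and the clipping bias is bounded pointwise by
     norm (x - clip(x, c)) = max 0 (norm x - c) <= norm x (norm x / c)^(rho - 1). *)

theory Submission
  imports Defs
begin

lemma norm_clip_le:
  fixes x :: "'v::real_normed_vector"
  assumes "c \<ge> 0"
  shows "norm (clip x c) \<le> norm x"
proof -
  have "0 \<le> c / norm x"
    using assms by simp
  then have "\<bar>min 1 (c / norm x)\<bar> \<le> 1"
    by (auto simp: abs_if min_def)
  then show ?thesis
    by (simp add: clip_def mult_left_le_one_le)
qed

lemma norm_diff_clip_le_powr:
  fixes x :: "'v::real_normed_vector"
  assumes "c > 0" and "\<rho> \<ge> 1"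
  shows "norm (x - clip x c) \<le> norm x powr \<rho> / c powr (\<rho> - 1)"
proof (cases "norm x \<le> c")
  case True
  then have "clip x c = x"
    by (cases "x = 0") (simp_all add: clip_def field_simps)
  then show ?thesis by simp
next
  case False
  define a where "a = norm x"
  have "a > c" "a > 0" using False assms(1) by (auto simp: a_def)
  have "clip x c = (c / a) *\<^sub>R x"
    using \<open>a > c\<close> \<open>a > 0\<close> by (simp add: clip_def a_def)
  then have "norm (x - clip x c) = norm ((1 - c / a) *\<^sub>R x)"
    by (simp add: algebra_simps)
  also have "\<dots> \<le> a"
    using \<open>a > c\<close> \<open>a > 0\<close> assms(1) by (simp add: a_def field_simps)
  also have "\<dots> \<le> a * (a / c) powr (\<rho> - 1)"
  proof -
    have "1 \<le> (a / c) powr (\<rho> - 1)"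
      using \<open>a > c\<close> assms by (intro ge_one_powr_ge_zero) auto
    then show ?thesis using \<open>a > 0\<close> by simp
  qed
  also have "\<dots> = a powr \<rho> / c powr (\<rho> - 1)"
    using \<open>a > 0\<close> assms(1) by (simp add: powr_divide powr_diff powr_add field_simps)
  finally show ?thesis by (simp add: a_def)
qed

lemma integrable_clip:
  fixes f :: "'a \<Rightarrow> 'b::{banach, second_countable_topology}"
  assumes "integrable M f" and "c \<ge> 0"
  shows "integrable M (\<lambda>x. clip (f x) c)"
proof (rule Bochner_Integration.integrable_bound[OF assms(1)])
  show "(\<lambda>x. clip (f x) c) \<in> borel_measurable M"
    using borel_measurable_integrable[OF assms(1)] unfolding clip_def by measurable
  show "AE x in M. norm (clip (f x) c) \<le> norm (f x)"
    by (intro AE_I2 norm_clip_le assms(2))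
qed

lemma (in finite_measure) integrable_of_integrable_norm_powr:
  fixes f :: "'a \<Rightarrow> 'b::{banach, second_countable_topology}"
  assumes "f \<in> borel_measurable M" and "integrable M (\<lambda>x. norm (f x) powr \<rho>)" and "\<rho> \<ge> 1"
  shows "integrable M f"
proof (rule Bochner_Integration.integrable_bound[where f="\<lambda>x. 1 + norm (f x) powr \<rho>"])
  have "a \<le> 1 + a powr \<rho>" if "a \<ge> 0" for a :: real
  proof (cases "a \<le> 1")
    case False
    then have "a powr 1 \<le> a powr \<rho>" using assms(3) by (intro powr_mono) auto
    then show ?thesis using that by simp
  qed (simp add: add_increasing2)
  then show "AE x in M. norm (f x) \<le> norm (1 + norm (f x) powr \<rho>)"
    by (intro AE_I2) simp
qed (use assms in auto)

lemma norm_integral_diff_clip_le: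
  fixes f :: "'a \<Rightarrow> 'b::{banach, second_countable_topology}"
  assumes f: "integrable M f" and mom: "integrable M (\<lambda>x. norm (f x) powr \<rho>)"
    and "c > 0" and "\<rho> \<ge> 1"
  shows "norm ((LINT x|M. f x) - (LINT x|M. clip (f x) c))
           \<le> (LINT x|M. norm (f x) powr \<rho>) / c powr (\<rho> - 1)"
proof -
  have fc: "integrable M (\<lambda>x. clip (f x) c)"
    using integrable_clip[OF f] \<open>c > 0\<close> by simp
  have "norm ((LINT x|M. f x) - (LINT x|M. clip (f x) c)) = norm (LINT x|M. f x - clip (f x) c)"
    using f fc by simp
  also have "\<dots> \<le> (LINT x|M. norm (f x - clip (f x) c))"
    by (rule integral_norm_bound)
  also have "\<dots> \<le> (LINT x|M. norm (f x) powr \<rho> / c powr (\<rho> - 1))"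
    using f fc mom norm_diff_clip_le_powr[OF assms(3,4)] by (intro integral_mono) auto
  finally show ?thesis by simp
qed

lemma integrable_componentwise:
  fixes f :: "'a \<Rightarrow> 'b::euclidean_space"
  assumes "f \<in> borel_measurable M" and "\<And>b. b \<in> Basis \<Longrightarrow> integrable M (\<lambda>x. f x \<bullet> b)"
  shows "integrable M f"
proof (rule Bochner_Integration.integrable_bound[where f="\<lambda>x. \<Sum>b\<in>Basis. \<bar>f x \<bullet> b\<bar>"])
  show "AE x in M. norm (f x) \<le> norm (\<Sum>b\<in>Basis. \<bar>f x \<bullet> b\<bar>)"
    using norm_le_l1 by (intro AE_I2) (simp add: sum_nonneg)
qed (use assms in auto)

lemma (in prob_space) zero_mean_gaussian_inner:
  fixes Z :: "'a \<Rightarrow> 'b::euclidean_space"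
  assumes "zero_mean_gaussian M Z"
  shows "integrable M (\<lambda>x. u \<bullet> Z x)" and "(LINT x|M. u \<bullet> Z x) = 0"
proof -
  have [measurable]: "Z \<in> borel_measurable M"
    using assms unfolding zero_mean_gaussian_def by simp
  from assms consider "AE x in M. u \<bullet> Z x = 0"
    | \<sigma> where "\<sigma> > 0" "distributed M lborel (\<lambda>x. u \<bullet> Z x) (\<lambda>y. ennreal (normal_density 0 \<sigma> y))"
    unfolding zero_mean_gaussian_def by blast
  then have "integrable M (\<lambda>x. u \<bullet> Z x) \<and> (LINT x|M. u \<bullet> Z x) = 0"
  proof cases
    case 1
    then show ?thesis
      using integrable_cong_AE[of "\<lambda>x. u \<bullet> Z x" M "\<lambda>_. 0"]
        integral_cong_AE[of "\<lambda>x. u \<bullet> Z x" M "\<lambda>_. 0"] by simp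
  next
    case (2 \<sigma>)
    have "integrable M (\<lambda>x. u \<bullet> Z x)"
      using distributed_integrable_var[OF 2(2)] integrable_normal_moment_nz_1[OF 2(1)]
      by (simp add: normal_density_nonneg)
    moreover have "(LINT x|M. u \<bullet> Z x) = 0"
      using normal_distributed_expectation[OF 2] by simp
    ultimately show ?thesis by simp
  qed
  then show "integrable M (\<lambda>x. u \<bullet> Z x)" and "(LINT x|M. u \<bullet> Z x) = 0"
    by auto
qed

lemma (in prob_space) zero_mean_gaussian_integrable:
  fixes Z :: "'a \<Rightarrow> 'b::euclidean_space"
  assumes "zero_mean_gaussian M Z"
  shows "integrable M Z"
proof (rule integrable_componentwise)
  show "Z \<in> borel_measurable M"
    using assms unfolding zero_mean_gaussian_def by simp
  show "integrable M (\<lambda>x. Z x \<bullet> b)" for b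
    using zero_mean_gaussian_inner(1)[OF assms, of b] by (simp only: inner_commute)
qed

lemma (in prob_space) zero_mean_gaussian_integral:
  fixes Z :: "'a \<Rightarrow> 'b::euclidean_space"
  assumes "zero_mean_gaussian M Z"
  shows "(LINT x|M. Z x) = 0"
proof (rule euclidean_eqI)
  fix b :: 'b
  have "(LINT x|M. Z x) \<bullet> b = (LINT x|M. b \<bullet> Z x)"
    using zero_mean_gaussian_integrable[OF assms] by (simp add: inner_commute)
  then show "(LINT x|M. Z x) \<bullet> b = 0 \<bullet> b"
    using zero_mean_gaussian_inner(2)[OF assms, of b] by simp
qed

(* indep_var only relates variables with a common codomain, so the independence of Y from the
   vector X is expressed through the linear functionals of X. *)
lemma (in prob_space) indep_var_integral_scaleR:
  fixes Y :: "'a \<Rightarrow> real" and X :: "'a \<Rightarrow> 'b::euclidean_space"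
  assumes ind: "\<And>u. indep_var borel Y borel (\<lambda>x. u \<bullet> X x)"
    and Y: "integrable M Y" and X: "integrable M X"
  shows "integrable M (\<lambda>x. Y x *\<^sub>R X x)"
    and "(LINT x|M. Y x *\<^sub>R X x) = (LINT x|M. Y x) *\<^sub>R (LINT x|M. X x)"
proof -
  have Xu: "integrable M (\<lambda>x. u \<bullet> X x)" for u
    using X by simp
  show YX: "integrable M (\<lambda>x. Y x *\<^sub>R X x)"
  proof (rule integrable_componentwise)
    show "(\<lambda>x. Y x *\<^sub>R X x) \<in> borel_measurable M"
      using borel_measurable_integrable[OF X] borel_measurable_integrable[OF Y] by measurable
    show "integrable M (\<lambda>x. Y x *\<^sub>R X x \<bullet> b)" for b
      using indep_var_integrable[OF ind Y Xu, of b] by (simp add: inner_commute)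
  qed
  show "(LINT x|M. Y x *\<^sub>R X x) = (LINT x|M. Y x) *\<^sub>R (LINT x|M. X x)"
  proof (rule euclidean_eqI)
    fix b :: 'b
    have "(LINT x|M. Y x *\<^sub>R X x) \<bullet> b = (LINT x|M. (Y x *\<^sub>R X x) \<bullet> b)"
      using YX by (rule integral_inner_left[symmetric])
    also have "\<dots> = (LINT x|M. Y x * (b \<bullet> X x))"
      by (rule Bochner_Integration.integral_cong) (simp_all add: inner_commute)
    also have "\<dots> = (LINT x|M. Y x) * (LINT x|M. b \<bullet> X x)"
      by (rule indep_var_lebesgue_integral[OF ind Y Xu])
    also have "\<dots> = ((LINT x|M. Y x) *\<^sub>R (LINT x|M. X x)) \<bullet> b"
      using X by (simp add: inner_commute)
    finally show "(LINT x|M. Y x *\<^sub>R X x) \<bullet> b = ((LINT x|M. Y x) *\<^sub>R (LINT x|M. X x)) \<bullet> b" .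
  qed
qed

lemma (in prob_space) bernoulli_expectation:
  fixes B :: "'a \<Rightarrow> bool" and g :: "bool \<Rightarrow> real"
  assumes "B \<in> measurable M (count_space UNIV)"
    and "distr M (count_space UNIV) B = measure_pmf (bernoulli_pmf p)" and "0 \<le> p" "p \<le> 1"
  shows "integrable M (\<lambda>x. g (B x))" and "(LINT x|M. g (B x)) = g True * p + g False * (1 - p)"
proof -
  have "integrable (distr M (count_space UNIV) B) g"
    unfolding assms(2) by (rule integrable_measure_pmf_finite) simp
  then show "integrable M (\<lambda>x. g (B x))"
    using assms(1) by (simp add: integrable_distr_eq)
  have "(LINT x|M. g (B x)) = integral\<^sup>L (distr M (count_space UNIV) B) g"
    using assms(1) by (simp add: integral_distr)
  then show "(LINT x|M. g (B x)) = g True * p + g False * (1 - p)"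
    using assms(3,4) by (simp add: assms(2))
qed

lemma (in prob_space) integral_sampled_update:
  fixes B :: "'a \<Rightarrow> bool" and X Z Z' :: "'a \<Rightarrow> 'b::euclidean_space"
  assumes B: "B \<in> measurable M (count_space UNIV)"
      "distr M (count_space UNIV) B = measure_pmf (bernoulli_pmf p)" "0 \<le> p" "p \<le> 1"
    and indep: "\<And>g u. indep_var borel (\<lambda>x. g (B x)) borel (\<lambda>x. u \<bullet> X x)"
      "\<And>g u. indep_var borel (\<lambda>x. g (B x)) borel (\<lambda>x. u \<bullet> Z x)"
      "\<And>g u. indep_var borel (\<lambda>x. g (B x)) borel (\<lambda>x. u \<bullet> Z' x)"
    and int: "integrable M X" "integrable M Z" "integrable M Z'"
    and mean_zero: "(LINT x|M. Z x) = 0" "(LINT x|M. Z' x) = 0"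
  defines "U \<equiv> \<lambda>x. (if B x then 1 else 0) *\<^sub>R (X x + Z x) + (1 - (if B x then 1 else 0)) *\<^sub>R Z' x"
  shows "integrable M U" and "(LINT x|M. U x) = p *\<^sub>R (LINT x|M. X x)"
proof -
  define \<beta> :: "'a \<Rightarrow> real" where "\<beta> = (\<lambda>x. if B x then 1 else 0)"
  have U_eq: "U = (\<lambda>x. \<beta> x *\<^sub>R X x + \<beta> x *\<^sub>R Z x + (1 - \<beta> x) *\<^sub>R Z' x)"
    by (simp add: U_def \<beta>_def fun_eq_iff scaleR_add_right)
  have \<beta>: "integrable M \<beta>" "(LINT x|M. \<beta> x) = p"
    "integrable M (\<lambda>x. 1 - \<beta> x)" "(LINT x|M. 1 - \<beta> x) = 1 - p"
    using bernoulli_expectation[OF B, of "\<lambda>b. if b then 1 else 0"]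
      bernoulli_expectation[OF B, of "\<lambda>b. 1 - (if b then 1 else 0)"]
    by (simp_all add: \<beta>_def)
  have "indep_var borel \<beta> borel (\<lambda>x. u \<bullet> X x)" "indep_var borel \<beta> borel (\<lambda>x. u \<bullet> Z x)"
    "indep_var borel (\<lambda>x. 1 - \<beta> x) borel (\<lambda>x. u \<bullet> Z' x)" for u
    using indep(1,2)[of "\<lambda>b. if b then 1 else 0"] indep(3)[of "\<lambda>b. 1 - (if b then 1 else 0)"]
    by (simp_all add: \<beta>_def)
  note X = indep_var_integral_scaleR[OF this(1) \<beta>(1) int(1)]
    and Z = indep_var_integral_scaleR[OF this(2) \<beta>(1) int(2)]
    and Z' = indep_var_integral_scaleR[OF this(3) \<beta>(3) int(3)]
  show "integrable M U"
    unfolding U_eq using X(1) Z(1) Z'(1) by simp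
  show "(LINT x|M. U x) = p *\<^sub>R (LINT x|M. X x)"
    unfolding U_eq using X Z Z' \<beta> mean_zero by simp
qed

lemma (in prob_space) indep_var_of_indep_sets:
  assumes ind: "indep_sets F I" and ij: "i \<in> I" "j \<in> I" "i \<noteq> j"
    and rv: "random_variable MX X" "random_variable MY Y"
    and FX: "\<And>A. A \<in> sets MX \<Longrightarrow> X -` A \<inter> space M \<in> F i"
    and FY: "\<And>A. A \<in> sets MY \<Longrightarrow> Y -` A \<inter> space M \<in> F j"
  shows "indep_var MX X MY Y"
proof -
  have "indep_set (F i) (F j)"
  proof (subst indep_sets2_eq, intro conjI ballI)
    show "F i \<subseteq> events" "F j \<subseteq> events"
      using ind ij unfolding indep_sets_def by auto
    fix a b assume ab: "a \<in> F i" "b \<in> F j"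
    have "prob (\<Inter>k\<in>{i,j}. if k = i then a else b) = (\<Prod>k\<in>{i,j}. prob (if k = i then a else b))"
      by (rule indep_setsD[OF ind]) (use ij ab in auto)
    then show "prob (a \<inter> b) = prob a * prob b"
      using ij by (simp add: Int_commute)
  qed
  then have "indep_sets (\<lambda>k. {case_bool X Y k -` A \<inter> space M | A. A \<in> sets (case_bool MX MY k)}) UNIV"
    unfolding indep_set_def by (rule indep_sets_mono_sets) (auto split: bool.split intro: FX FY)
  then show ?thesis
    unfolding indep_var_def indep_vars_def2 using rv by (auto split: bool.split)
qed

lemma (in prob_space) fl_events_indep_var:
  fixes D z zt :: "nat \<Rightarrow> 'a \<Rightarrow> 'v::euclidean_space" and b :: "nat \<Rightarrow> 'a \<Rightarrow> bool"
    and f :: "'v \<Rightarrow> real" and g :: "bool \<Rightarrow> real"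
  assumes indep: "indep_sets (fl_events M N D b z zt) (fl_index N)" and n: "n \<in> {1..N}"
    and meas: "D n \<in> borel_measurable M" "b n \<in> measurable M (count_space UNIV)"
      "z n \<in> borel_measurable M" "zt n \<in> borel_measurable M"
    and f: "f \<in> borel_measurable borel"
  shows "indep_var borel (\<lambda>x. g (b n x)) borel (\<lambda>x. f (D n x))"
    and "indep_var borel (\<lambda>x. g (b n x)) borel (\<lambda>x. f (z n x))"
    and "indep_var borel (\<lambda>x. g (b n x)) borel (\<lambda>x. f (zt n x))"
proof -
  let ?F = "fl_events M N D b z zt"
  have idx: "SampIdx n \<in> fl_index N" "DataIdx \<in> fl_index N"
    "NoiseIdx n \<in> fl_index N" "AltNoiseIdx n \<in> fl_index N"
    using n by (auto simp: fl_index_def)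
  have sample: "(\<lambda>x. g (b n x)) -` A \<inter> space M \<in> ?F (SampIdx n)" for A
    unfolding fl_events_def by (auto intro!: exI[of _ "g -` A"])
  have f_pre: "f -` A \<inter> space borel \<in> sets borel" if "A \<in> sets borel" for A
    using f that by (rule measurable_sets)
  have g_rv: "random_variable borel (\<lambda>x. g (b n x))"
    using meas(2) by measurable
  show "indep_var borel (\<lambda>x. g (b n x)) borel (\<lambda>x. f (D n x))"
  proof (rule indep_var_of_indep_sets[OF indep idx(1,2) _ g_rv _ sample])
    fix A :: "real set" assume "A \<in> sets borel"
    then have "D n -` (f -` A \<inter> space borel) \<inter> space M \<in> ?F DataIdx"
      unfolding fl_events_def ridx.case using n f_pre by (intro sigma_sets.Basic UN_I) auto
    then show "(\<lambda>x. f (D n x)) -` A \<inter> space M \<in> ?F DataIdx"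
      by (simp add: vimage_def)
  qed (simp_all add: measurable_compose[OF meas(1) f])
  show "indep_var borel (\<lambda>x. g (b n x)) borel (\<lambda>x. f (z n x))"
  proof (rule indep_var_of_indep_sets[OF indep idx(1,3) _ g_rv _ sample])
    show "(\<lambda>x. f (z n x)) -` A \<inter> space M \<in> ?F (NoiseIdx n)" if "A \<in> sets borel" for A
      unfolding fl_events_def using f_pre[OF that] by (auto intro!: exI[of _ "f -` A"])
  qed (simp_all add: measurable_compose[OF meas(3) f])
  show "indep_var borel (\<lambda>x. g (b n x)) borel (\<lambda>x. f (zt n x))"
  proof (rule indep_var_of_indep_sets[OF indep idx(1,4) _ g_rv _ sample])
    show "(\<lambda>x. f (zt n x)) -` A \<inter> space M \<in> ?F (AltNoiseIdx n)" if "A \<in> sets borel" for A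
      unfolding fl_events_def using f_pre[OF that] by (auto intro!: exI[of _ "f -` A"])
  qed (simp_all add: measurable_compose[OF meas(4) f])
qed

lemma (in prob_space) fl_client_update_integral:
  fixes D z zt :: "nat \<Rightarrow> 'a \<Rightarrow> 'v::euclidean_space" and b :: "nat \<Rightarrow> 'a \<Rightarrow> bool"
  assumes indep: "indep_sets (fl_events M N D b z zt) (fl_index N)" and n: "n \<in> {1..N}"
    and D: "integrable M (D n)" and "c \<ge> 0"
    and b: "b n \<in> measurable M (count_space UNIV)"
      "distr M (count_space UNIV) (b n) = measure_pmf (bernoulli_pmf p)" "0 \<le> p" "p \<le> 1"
    and z: "zero_mean_gaussian M (z n)" and zt: "zero_mean_gaussian M (zt n)"
  defines "U \<equiv> \<lambda>x. (if b n x then 1 else 0) *\<^sub>R (clip (D n x) c + z n x)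
                  + (1 - (if b n x then 1 else 0)) *\<^sub>R zt n x"
  shows "integrable M U" and "(LINT x|M. U x) = p *\<^sub>R (LINT x|M. clip (D n x) c)"
proof -
  have meas: "D n \<in> borel_measurable M" "b n \<in> measurable M (count_space UNIV)"
    "z n \<in> borel_measurable M" "zt n \<in> borel_measurable M"
    using D b(1) z zt by (simp_all add: zero_mean_gaussian_def)
  have clip_meas: "(\<lambda>v. u \<bullet> clip v c) \<in> borel_measurable borel" for u :: 'v
    unfolding clip_def by measurable
  have inner_meas: "(\<lambda>v. u \<bullet> v) \<in> borel_measurable borel" for u :: 'v
    by simp
  have "integrable M (\<lambda>x. clip (D n x) c)"
    using integrable_clip[OF D \<open>c \<ge> 0\<close>] .
  note update = integral_sampled_update[where X="\<lambda>x. clip (D n x) c", OF b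
      fl_events_indep_var(1)[OF indep n meas clip_meas]
      fl_events_indep_var(2,3)[OF indep n meas inner_meas] this
      zero_mean_gaussian_integrable[OF z] zero_mean_gaussian_integrable[OF zt]
      zero_mean_gaussian_integral[OF z] zero_mean_gaussian_integral[OF zt]]
  show "integrable M U" and "(LINT x|M. U x) = p *\<^sub>R (LINT x|M. clip (D n x) c)"
    unfolding U_def using update by simp_all
qed

lemma norm_sum_diff_scaleR_le:
  fixes d e :: "'i \<Rightarrow> 'v::real_normed_vector"
  assumes "\<And>n. n \<in> A \<Longrightarrow> 0 \<le> w n" and "\<And>n. n \<in> A \<Longrightarrow> norm (d n - e n) \<le> \<beta> n"
  shows "norm ((\<Sum>n\<in>A. d n) - (\<Sum>n\<in>A. w n *\<^sub>R e n))
           \<le> norm (\<Sum>n\<in>A. (1 - w n) *\<^sub>R d n) + (\<Sum>n\<in>A. w n * \<beta> n)"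
proof -
  have "(\<Sum>n\<in>A. d n) - (\<Sum>n\<in>A. w n *\<^sub>R e n)
      = (\<Sum>n\<in>A. (1 - w n) *\<^sub>R d n) + (\<Sum>n\<in>A. w n *\<^sub>R (d n - e n))"
    by (simp add: sum.distrib[symmetric] sum_subtractf[symmetric] algebra_simps)
  also have "norm \<dots> \<le> norm (\<Sum>n\<in>A. (1 - w n) *\<^sub>R d n) + (\<Sum>n\<in>A. norm (w n *\<^sub>R (d n - e n)))"
    by (intro order.trans[OF norm_triangle_ineq] add_left_mono norm_sum)
  also have "(\<Sum>n\<in>A. norm (w n *\<^sub>R (d n - e n))) \<le> (\<Sum>n\<in>A. w n * \<beta> n)"
    using assms by (intro sum_mono) (simp add: mult_left_mono)
  finally show ?thesis by simp
qed

lemma norm_integral_weighted_mean_diff_le: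
  fixes X Y :: "'i \<Rightarrow> 'a \<Rightarrow> 'v::{banach, second_countable_topology}"
  assumes X: "\<And>n. n \<in> A \<Longrightarrow> integrable M (X n)" and Y: "\<And>n. n \<in> A \<Longrightarrow> integrable M (Y n)"
    and Y_integral: "\<And>n. n \<in> A \<Longrightarrow> (LINT x|M. Y n x) = w n *\<^sub>R e n"
    and w: "\<And>n. n \<in> A \<Longrightarrow> 0 \<le> w n"
    and \<beta>: "\<And>n. n \<in> A \<Longrightarrow> norm ((LINT x|M. X n x) - e n) \<le> \<beta> n" and "a \<ge> 0"
  shows "norm (LINT x|M. a *\<^sub>R (\<Sum>n\<in>A. X n x) - a *\<^sub>R (\<Sum>n\<in>A. Y n x))
           \<le> a * norm (\<Sum>n\<in>A. (1 - w n) *\<^sub>R (LINT x|M. X n x)) + a * (\<Sum>n\<in>A. w n * \<beta> n)"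
proof -
  have "integrable M (\<lambda>x. \<Sum>n\<in>A. X n x)" "integrable M (\<lambda>x. \<Sum>n\<in>A. Y n x)"
    using X Y by (auto intro!: Bochner_Integration.integrable_sum)
  then have "norm (LINT x|M. a *\<^sub>R (\<Sum>n\<in>A. X n x) - a *\<^sub>R (\<Sum>n\<in>A. Y n x))
      = a * norm ((\<Sum>n\<in>A. LINT x|M. X n x) - (\<Sum>n\<in>A. w n *\<^sub>R e n))"
    using X Y Y_integral \<open>a \<ge> 0\<close>
    by (simp add: Bochner_Integration.integral_sum scaleR_diff_right[symmetric])
  also have "\<dots> \<le> a * (norm (\<Sum>n\<in>A. (1 - w n) *\<^sub>R (LINT x|M. X n x)) + (\<Sum>n\<in>A. w n * \<beta> n))"
    using w \<beta> \<open>a \<ge> 0\<close> by (intro mult_left_mono norm_sum_diff_scaleR_le) auto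
  finally show ?thesis
    by (simp add: distrib_left)
qed

theorem mainTheorem3:
  fixes M :: "'a measure"
    and N :: nat and \<rho> :: real
    and D :: "nat \<Rightarrow> 'a \<Rightarrow> real ^ 'w"
    and q c :: "nat \<Rightarrow> real" and qbar :: real
    and b :: "nat \<Rightarrow> 'a \<Rightarrow> bool"
    and z zt :: "nat \<Rightarrow> 'a \<Rightarrow> real ^ 'w"
  assumes "prob_space M"
    and "N \<ge> 1" and "\<rho> > 1"
    and D_meas: "\<And>n. n \<in> {1..N} \<Longrightarrow> D n \<in> borel_measurable M"
    and D_mom: "\<And>n. n \<in> {1..N} \<Longrightarrow> integrable M (\<lambda>x. norm (D n x) powr \<rho>)"
    and q_range: "\<And>n. n \<in> {1..N} \<Longrightarrow> 0 < q n \<and> q n \<le> 1"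
    and c_pos: "\<And>n. n \<in> {1..N} \<Longrightarrow> c n > 0"
    and qbar_def: "qbar = (\<Sum>n=1..N. q n) / real N"
    and b_meas: "\<And>n. n \<in> {1..N} \<Longrightarrow> b n \<in> measurable M (count_space UNIV)"
    and b_bern: "\<And>n. n \<in> {1..N} \<Longrightarrow>
                   distr M (count_space UNIV) (b n) = measure_pmf (bernoulli_pmf (q n))"
    and z_gauss: "\<And>n. n \<in> {1..N} \<Longrightarrow> zero_mean_gaussian M (z n)"
    and zt_gauss: "\<And>n. n \<in> {1..N} \<Longrightarrow> zero_mean_gaussian M (zt n)"
    and indep: "prob_space.indep_sets M (fl_events M N D b z zt) (fl_index N)"
  shows "norm (LINT x|M.
            (1 / real N) *\<^sub>R (\<Sum>n=1..N. D n x)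
          - (1 / real N) *\<^sub>R (\<Sum>n=1..N. (1 / qbar) *\<^sub>R
               ((if b n x then 1 else 0) *\<^sub>R (clip (D n x) (c n) + z n x)
                + (1 - (if b n x then 1 else 0)) *\<^sub>R zt n x)))
         \<le> (1 / real N) * norm (\<Sum>n=1..N. (1 - q n / qbar) *\<^sub>R (LINT x|M. D n x))
           + (1 / real N) * (\<Sum>n=1..N. (q n / qbar) *
               ((LINT x|M. norm (D n x) powr \<rho>) / c n powr (\<rho> - 1)))"
proof -
  interpret prob_space M by fact
  define U where "U n = (\<lambda>x. (1 / qbar) *\<^sub>R
    ((if b n x then 1 else 0) *\<^sub>R (clip (D n x) (c n) + z n x)
      + (1 - (if b n x then 1 else 0)) *\<^sub>R zt n x))" for n
  have "(\<Sum>n=1..N. q n) > 0"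
    using q_range \<open>N \<ge> 1\<close> by (intro sum_pos) simp_all
  then have "qbar > 0"
    using \<open>N \<ge> 1\<close> by (simp add: qbar_def)
  then have weight_nonneg: "0 \<le> q n / qbar" if "n \<in> {1..N}" for n
    using q_range[OF that] by simp
  have D_int: "integrable M (D n)" if "n \<in> {1..N}" for n
    using integrable_of_integrable_norm_powr[OF D_meas[OF that] D_mom[OF that]] \<open>\<rho> > 1\<close>
    by simp
  have U_int: "integrable M (U n)"
    and U_integral: "(LINT x|M. U n x) = (q n / qbar) *\<^sub>R (LINT x|M. clip (D n x) (c n))"
    if n: "n \<in> {1..N}" for n
    using fl_client_update_integral[OF indep n D_int[OF n] _ b_meas[OF n] b_bern[OF n] _ _
        z_gauss[OF n] zt_gauss[OF n]] c_pos[OF n] q_range[OF n]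
    unfolding U_def by simp_all
  have bias: "norm ((LINT x|M. D n x) - (LINT x|M. clip (D n x) (c n)))
      \<le> (LINT x|M. norm (D n x) powr \<rho>) / c n powr (\<rho> - 1)" if "n \<in> {1..N}" for n
    using norm_integral_diff_clip_le[OF D_int[OF that] D_mom[OF that] c_pos[OF that]] \<open>\<rho> > 1\<close>
    by simp
  show ?thesis
    using norm_integral_weighted_mean_diff_le[where A="{1..N}" and X=D and Y=U and a="1 / real N",
        OF D_int U_int U_integral weight_nonneg bias]
    unfolding U_def by simp
qed

end
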